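(* Let $G$, $\mathrm{b}$, $(w_{ij})$, the update sequence $A$, Async-BP and the generalized computation trees $R_i^t$ be as in the context. Then Async-BP solves the minimum weight perfect tree-$\mathrm{b}$-matching problem on the generalized computation tree: for each vertex $i$ of $G$ and each $t$, the set $E_i(t)$ chosen at the end of iteration $t$ by Async-BP is exactly the set of $b_i$ edges attached to the root (via labels) in the minimum weight perfect tree-$\mathrm{b}$-matching of $R_i^t$.
   Context: Let $G=(V,E)$ be a finite undirected simple graph, $V=\{1,\dots,n\}$, with real edge weights $w_{ij}$ and positive integers $b_i$ with $\deg_G(i)\ge b_i+1$; $N(i)$ is the neighbour set of $i$. Let $\vec E=\{(i\to j):\{i,j\}\in E\}$ and let $A=(\vec E(1),\vec E(2),\dots)$ be a sequence of subsets of $\vec E$ such that if $(i\to j)\in\vec E(t)\cap\vec E(t+s)$ and $(i\to j)\notin\bigcup_{r=1}^{s-1}\vec E(t+r)$ then $(\ell\to i)\in\bigcup_{r=1}^{s-1}\vec E(t+r)$ for some $\ell\in N(i)\setminus\{j\}$. Async-BP: $m_{i\to j}(0)=w_{ij}$; for $t\ge1$, $m_{i\to j}(t)=w_{ij}-\big(b_i\text{-th smallest of }\{m_{\ell\to i}(t-1):\ell\in N(i)\setminus\{j\}\}\big)$ if $(i\to j)\in\vec E(t)$, else $m_{i\to j}(t)=m_{i\to j}(t-1)$; $E_i(t)$ consists of the $b_i$ edges $\{i,j\}$ whose incoming messages $m_{j\to i}(t)$ are smallest (neighbours ordered by nondecreasing incoming message). Computation branches: for $(i\to j)\in\vec E$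 and $t\ge0$, $R^t_{i\to j}$ is the rooted labelled tree whose root is labelled $j$ and has a single child labelled $i$; if $t=0$ it is just this edge; if $t>0$ and $(i\to j)\notin\vec E(t)$ then $R^t_{i\to j}=R^{t-1}_{i\to j}$; otherwise the node $i$ has $\deg_G(i)-1$ children labelled by the elements of $N(i)\setminus\{j\}$, and for each such child $r$, the subtree consisting of $r$, its descendants and the edge $\{r,i\}$ is a copy of $R^{t-1}_{r\to i}$. Each edge between nodes labelled $a,c$ has weight $w_{ac}$. The generalized computation tree $R_i^t$ is the rooted tree with root labelled $i$ whose branches from the root are the computation branches $R^t_{r\to i}$, $r\in N(i)$ (glued at their roots). A perfect tree-$\mathrm{b}$-matching of $R_i^t$ is a set of its edges such that every non-leaf node labelled $s$ is incident to exactly $b_s$ of them; the minimum weight one minimizes total weight. *)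

theory Defs
  imports Complex_Main "HOL-Library.Multiset"
begin

text \<open>Simple graph: finite vertex set V, edges are 2-element subsets of V.
  Weights are given on (undirected) edges: w_ij = w {i,j}.\<close>

definition simple_graph :: "'v set \<Rightarrow> 'v set set \<Rightarrow> bool" where
  "simple_graph V E \<longleftrightarrow> finite V \<and> (\<forall>e\<in>E. \<exists>x y. x \<in> V \<and> y \<in> V \<and> x \<noteq> y \<and> e = {x, y})"

definition nbrs :: "'v set set \<Rightarrow> 'v \<Rightarrow> 'v set" where
  "nbrs E i = {j. {i, j} \<in> E}"

definition darcs :: "'v set set \<Rightarrow> ('v \<times> 'v) set" where
  "darcs E = {(i, j). {i, j} \<in> E}"

text \<open>Admissible update sequence A = (A 1, A 2, ...); A 0 is unused.\<close>
definition valid_schedule :: "'v set set \<Rightarrow> (nat \<Rightarrow> ('v \<times> 'v) set) \<Rightarrow> bool" where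
  "valid_schedule E A \<longleftrightarrow>
     (\<forall>t\<ge>1. A t \<subseteq> darcs E) \<and>
     (\<forall>t\<ge>1. \<forall>s\<ge>1. \<forall>i j. (i, j) \<in> A t \<and> (i, j) \<in> A (t + s) \<and>
          (i, j) \<notin> (\<Union>r\<in>{1..s-1}. A (t + r)) \<longrightarrow>
          (\<exists>l \<in> nbrs E i - {j}. (l, i) \<in> (\<Union>r\<in>{1..s-1}. A (t + r))))"

definition kth_smallest :: "nat \<Rightarrow> real multiset \<Rightarrow> real" where
  "kth_smallest k M = sorted_list_of_multiset M ! (k - 1)"

fun msg :: "'v set set \<Rightarrow> ('v set \<Rightarrow> real) \<Rightarrow> ('v \<Rightarrow> nat) \<Rightarrow> (nat \<Rightarrow> ('v \<times> 'v) set)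
             \<Rightarrow> nat \<Rightarrow> 'v \<Rightarrow> 'v \<Rightarrow> real" where
  "msg E w b A 0 i j = w {i, j}"
| "msg E w b A (Suc t) i j =
     (if (i, j) \<in> A (Suc t)
      then w {i, j} - kth_smallest (b i)
             (image_mset (\<lambda>l. msg E w b A t l i) (mset_set (nbrs E i - {j})))
      else msg E w b A t i j)"

text \<open>F is a valid choice of the b_i neighbours of i with the smallest incoming
  messages m_{j->i}(t) (any tie-breaking); E_i(t) = {{i,j} | j in F}.\<close>
definition bp_choice :: "'v set set \<Rightarrow> ('v set \<Rightarrow> real) \<Rightarrow> ('v \<Rightarrow> nat) \<Rightarrow> (nat \<Rightarrow> ('v \<times> 'v) set)
             \<Rightarrow> nat \<Rightarrow> 'v \<Rightarrow> 'v set \<Rightarrow> bool" where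
  "bp_choice E w b A t i F \<longleftrightarrow> F \<subseteq> nbrs E i \<and> card F = b i \<and>
     (\<forall>j\<in>F. \<forall>k\<in>nbrs E i - F. msg E w b A t j i \<le> msg E w b A t k i)"

text \<open>Trees are represented by their node sets; a node is identified by the list of
  labels on the path from the root down to it (children of a node carry distinct labels).
  branch E A t i j is the set of nodes of the subtree of R^t_{i->j} hanging at the node
  labelled i (paths starting with i).\<close>
fun branch :: "'v set set \<Rightarrow> (nat \<Rightarrow> ('v \<times> 'v) set) \<Rightarrow> nat \<Rightarrow> 'v \<Rightarrow> 'v \<Rightarrow> 'v list set" where
  "branch E A 0 i j = {[i]}"
| "branch E A (Suc t) i j =
     (if (i, j) \<in> A (Suc t)
      then {[i]} \<union> {i # p | p r. r \<in> nbrs E i - {j} \<and> p \<in> branch E A t r i}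
      else branch E A t i j)"

definition comp_tree :: "'v set set \<Rightarrow> (nat \<Rightarrow> ('v \<times> 'v) set) \<Rightarrow> nat \<Rightarrow> 'v \<Rightarrow> 'v list set" where
  "comp_tree E A t i = {[i]} \<union> {i # p | p r. r \<in> nbrs E i \<and> p \<in> branch E A t r i}"

text \<open>Edges of a tree T are identified with their lower (child) endpoint q, length q >= 2;
  the edge joins q to its parent butlast q.\<close>
definition tree_edges :: "'v list set \<Rightarrow> 'v list set" where
  "tree_edges T = {q \<in> T. 2 \<le> length q}"

definition tree_edge_weight :: "('v set \<Rightarrow> real) \<Rightarrow> 'v list \<Rightarrow> real" where
  "tree_edge_weight w q = w {last (butlast q), last q}"

definition non_leaf :: "'v list set \<Rightarrow> 'v list \<Rightarrow> bool" where
  "non_leaf T p \<longleftrightarrow> p \<in> T \<and> (\<exists>c. p @ [c] \<in> T)"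

text \<open>Tree edges incident to node p: the edge to its parent (p itself) and the edges to its children.\<close>
definition incident :: "'v list set \<Rightarrow> 'v list \<Rightarrow> 'v list set" where
  "incident M p = {q \<in> M. q = p \<or> butlast q = p}"

definition perfect_tree_b_matching :: "('v \<Rightarrow> nat) \<Rightarrow> 'v list set \<Rightarrow> 'v list set \<Rightarrow> bool" where
  "perfect_tree_b_matching b T M \<longleftrightarrow> M \<subseteq> tree_edges T \<and>
     (\<forall>p. non_leaf T p \<longrightarrow> card (incident M p) = b (last p))"

definition min_perfect_tree_b_matching ::
  "('v set \<Rightarrow> real) \<Rightarrow> ('v \<Rightarrow> nat) \<Rightarrow> 'v list set \<Rightarrow> 'v list set \<Rightarrow> bool" where
  "min_perfect_tree_b_matching w b T M \<longleftrightarrow> perfect_tree_b_matching b T M \<and>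
     (\<forall>M'. perfect_tree_b_matching b T M' \<longrightarrow>
        (\<Sum>q\<in>M. tree_edge_weight w q) \<le> (\<Sum>q\<in>M'. tree_edge_weight w q))"

end

theory Submission
  imports Defs
begin

text \<open>By induction on t, the message m_{i->j}(t) is the difference between the minimum weights
  of the b-matchings of the branch R^t_{i->j} that use, respectively avoid, its top edge
  {j, i}. Indeed, such a b-matching is a choice of optimal b-matchings in the child branches,
  with or without their top edges, such that exactly b_i (resp. b_i - 1) top edges are used;
  the optimum uses the top edges of the children with the smallest messages, so the two
  optima differ by w_{ij} minus the b_i-th smallest incoming message. The same selection
  at the root of R_i^t shows that taking the edges to the b_i neighbours with the smallest
  incoming messages gives a minimum perfect tree-b-matching, which by uniqueness is the
  given one.\<close>

section \<open>Sums of smallest values\<close>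

lemma sum_smallest_le:
  fixes f :: "'a \<Rightarrow> real"
  assumes "finite R" "P \<subseteq> R" "T \<subseteq> R" "card P = card T"
    and thr: "\<forall>x\<in>P. \<forall>y\<in>R-P. f x \<le> f y"
  shows "sum f P \<le> sum f T"
proof -
  have fP: "finite P" "finite T" using assms(1,2,3) finite_subset by auto
  have sP: "sum f P = sum f (P \<inter> T) + sum f (P - T)"
    using fP sum.Int_Diff by blast
  have sT: "sum f T = sum f (P \<inter> T) + sum f (T - P)"
    using fP sum.Int_Diff[of T f P] by (simp add: Int_commute)
  have cd: "card (P - T) = card (T - P)"
    using fP assms(4) card_Diff_subset_Int[of P T] card_Diff_subset_Int[of T P] by (simp add: Int_commute)
  show ?thesis
  proof (cases "P - T = {}")
    case True
    then have "T - P = {}" using cd fP by (metis card_0_eq finite_Diff)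
    then have "sum f (T - P) = 0" "sum f (P - T) = 0" using True by simp_all
    then show ?thesis using sP sT by linarith
  next
    case False
    define c where "c = Max (f ` (P - T))"
    have fin: "finite (f ` (P - T))" using fP by simp
    have c1: "\<forall>x\<in>P - T. f x \<le> c" unfolding c_def using fin by auto
    have "c \<in> f ` (P - T)" unfolding c_def using False fin by (intro Max_in) auto
    then obtain x0 where x0: "x0 \<in> P - T" "c = f x0" by auto
    have c2: "\<forall>y\<in>T - P. c \<le> f y" using x0 thr assms(3) by auto
    have "sum f (P - T) \<le> of_nat (card (P - T)) * c"
      using sum_bounded_above[of "P - T" f c] c1 by auto
    also have "\<dots> = of_nat (card (T - P)) * c" using cd by simp
    also have "\<dots> \<le> sum f (T - P)"
      using sum_bounded_below[of "T - P" c f] c2 by auto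
    finally show ?thesis using sP sT by linarith
  qed
qed

lemma kth_smallest_as_difference:
  fixes f :: "'a \<Rightarrow> real"
  assumes "finite R" "k \<le> card R" "1 \<le> k"
  obtains P P' where "P \<subseteq> R" "card P = k" "\<forall>x\<in>P. \<forall>y\<in>R - P. f x \<le> f y"
    and "P' \<subseteq> R" "card P' = k - 1" "\<forall>x\<in>P'. \<forall>y\<in>R - P'. f x \<le> f y"
    and "sum f P - sum f P' = kth_smallest k (image_mset f (mset_set R))"
proof -
  obtain xs where xs: "distinct xs" "set xs = R" using assms(1) finite_distinct_list by blast
  define ys where "ys = sort_key f xs"
  have ys: "distinct ys" "set ys = R" "sorted (map f ys)" "mset ys = mset xs"
    using xs unfolding ys_def by (auto simp: sorted_sort_key)
  have len: "length ys = card R" using ys distinct_card by metis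
  have ms: "image_mset f (mset_set R) = mset (map f ys)"
    using xs ys mset_set_set by (metis mset_map)
  have kth: "kth_smallest k (image_mset f (mset_set R)) = f (ys ! (k - 1))"
    unfolding kth_smallest_def ms sorted_list_of_multiset_mset sorted_sort_id[OF ys(3)]
    using assms len by simp
  have thr: "\<forall>x\<in>set (take n ys). \<forall>y\<in>R - set (take n ys). f x \<le> f y" for n
  proof (intro ballI)
    fix x y assume x: "x \<in> set (take n ys)" and y: "y \<in> R - set (take n ys)"
    have y2: "y \<in> set (drop n ys)" using y ys(2)
      by (metis Diff_iff append_take_drop_id set_append Un_iff)
    have "sorted (map f (take n ys) @ map f (drop n ys))"
      using ys(3) by (metis append_take_drop_id map_append)
    then show "f x \<le> f y" using x y2 by (auto simp: sorted_append)
  qed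
  have cardt: "card (set (take n ys)) = n" if "n \<le> card R" for n
    using that ys(1) len by (simp add: distinct_card)
  have tk: "take k ys = take (k - 1) ys @ [ys ! (k - 1)]"
    using assms len take_Suc_conv_app_nth[of "k - 1" ys] by simp
  have nin: "ys ! (k - 1) \<notin> set (take (k - 1) ys)"
    using ys(1) tk by (metis distinct_take distinct_append disjoint_iff list.set_intros(1) set_append)
  have "sum f (set (take k ys)) = f (ys ! (k - 1)) + sum f (set (take (k - 1) ys))"
    using tk nin by simp
  moreover have "set (take n ys) \<subseteq> R" for n using ys(2) set_take_subset by metis
  ultimately show ?thesis using that[of "set (take k ys)" "set (take (k - 1) ys)"] thr cardt assms kth
    by auto
qed

section \<open>Grafted trees\<close>

text \<open>graft i R Nf m is the set of label paths of a tree with root i whose child r \<in> R carries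
  the paths Nf r (all starting with r); the path [i] stands for the edge from i to its parent
  and belongs to the set iff m. Branches, generalized computation trees and b-matchings of
  them are all of this form. In a branch the parent of the root lies outside, so
  branch_weight takes its label j as a parameter.\<close>
definition graft :: "'v \<Rightarrow> 'v set \<Rightarrow> ('v \<Rightarrow> 'v list set) \<Rightarrow> bool \<Rightarrow> 'v list set" where
  "graft i R Nf m = (if m then {[i]} else {}) \<union> {i # p | p r. r \<in> R \<and> p \<in> Nf r}"

definition graft_part :: "'v \<Rightarrow> 'v list set \<Rightarrow> 'v list set \<Rightarrow> 'v list set" where
  "graft_part i N Sr = {p \<in> Sr. i # p \<in> N}"

definition branch_b_matching :: "('v \<Rightarrow> nat) \<Rightarrow> 'v list set \<Rightarrow> 'v list set \<Rightarrow> bool" where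
  "branch_b_matching b B N \<longleftrightarrow> N \<subseteq> B \<and> (\<forall>p. non_leaf B p \<longrightarrow> card (incident N p) = b (last p))"

definition branch_weight :: "('v set \<Rightarrow> real) \<Rightarrow> 'v \<Rightarrow> 'v list set \<Rightarrow> real" where
  "branch_weight w j N = (\<Sum>q\<in>N. w {last (j # butlast q), last q})"

definition rooted_at :: "'v set \<Rightarrow> ('v \<Rightarrow> 'v list set) \<Rightarrow> bool" where
  "rooted_at R Nf \<longleftrightarrow> (\<forall>r\<in>R. \<forall>p\<in>Nf r. p \<noteq> [] \<and> hd p = r)"

lemma graft_mem:
  assumes "rooted_at R Nf"
  shows "q \<in> graft i R Nf m \<longleftrightarrow> (q = [i] \<and> m) \<or> (\<exists>p. q = i # p \<and> p \<noteq> [] \<and> hd p \<in> R \<and> p \<in> Nf (hd p))"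
proof
  assume "q \<in> graft i R Nf m"
  then consider "q = [i] \<and> m" | p r where "q = i # p" "r \<in> R" "p \<in> Nf r"
    unfolding graft_def by (auto split: if_splits)
  then show "(q = [i] \<and> m) \<or> (\<exists>p. q = i # p \<and> p \<noteq> [] \<and> hd p \<in> R \<and> p \<in> Nf (hd p))"
  proof cases
    case (2 p r)
    then have "p \<noteq> [] \<and> hd p = r" using assms unfolding rooted_at_def by blast
    then show ?thesis using 2 by (intro disjI2 exI[of _ p]) simp
  qed simp
next
  assume "(q = [i] \<and> m) \<or> (\<exists>p. q = i # p \<and> p \<noteq> [] \<and> hd p \<in> R \<and> p \<in> Nf (hd p))"
  then show "q \<in> graft i R Nf m"
  proof
    assume "q = [i] \<and> m" then show ?thesis unfolding graft_def by simp
  next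
    assume "\<exists>p. q = i # p \<and> p \<noteq> [] \<and> hd p \<in> R \<and> p \<in> Nf (hd p)"
    then obtain p where "q = i # p" "hd p \<in> R" "p \<in> Nf (hd p)" by blast
    then show ?thesis unfolding graft_def by blast
  qed
qed

lemma Cons_mem_graft:
  assumes "rooted_at R Nf" "p \<noteq> []"
  shows "i # p \<in> graft i R Nf m \<longleftrightarrow> hd p \<in> R \<and> p \<in> Nf (hd p)"
  using graft_mem[OF assms(1)] assms(2) by auto

lemma root_mem_graft:
  assumes "rooted_at R Nf"
  shows "[i] \<in> graft i R Nf m \<longleftrightarrow> m"
  using graft_mem[OF assms(1)] by auto

lemma rooted_at_mono: "rooted_at R S \<Longrightarrow> \<forall>r\<in>R. Nf r \<subseteq> S r \<Longrightarrow> rooted_at R Nf"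
  unfolding rooted_at_def by blast

lemma graft_mono: "\<forall>r\<in>R. Nf r \<subseteq> S r \<Longrightarrow> graft i R Nf m \<subseteq> graft i R S True"
  unfolding graft_def by auto

lemma graft_decompose:
  assumes "rooted_at R S" "N \<subseteq> graft i R S True"
  shows "N = graft i R (\<lambda>r. graft_part i N (S r)) ([i] \<in> N)"
proof -
  have h: "rooted_at R (\<lambda>r. graft_part i N (S r))" using assms(1) unfolding rooted_at_def graft_part_def by auto
  show ?thesis
  proof (rule set_eqI)
    fix q
    show "q \<in> N \<longleftrightarrow> q \<in> graft i R (\<lambda>r. graft_part i N (S r)) ([i] \<in> N)"
      unfolding graft_mem[OF h]
    proof
      assume q: "q \<in> N"
      then have "q \<in> graft i R S True" using assms by blast
      then show "(q = [i] \<and> [i] \<in> N) \<or> (\<exists>p. q = i # p \<and> p \<noteq> [] \<and> hd p \<in> R \<and> p \<in> graft_part i N (S (hd p)))"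
        unfolding graft_mem[OF assms(1)] graft_part_def using q by auto
    next
      assume "(q = [i] \<and> [i] \<in> N) \<or> (\<exists>p. q = i # p \<and> p \<noteq> [] \<and> hd p \<in> R \<and> p \<in> graft_part i N (S (hd p)))"
      then show "q \<in> N" unfolding graft_part_def by auto
    qed
  qed
qed

lemma graft_part_subset: "graft_part i N Sr \<subseteq> Sr" unfolding graft_part_def by auto

lemma non_leaf_graft_root:
  assumes "\<forall>r\<in>R. [r] \<in> S r" "rooted_at R S"
  shows "non_leaf (graft i R S True) [i] \<longleftrightarrow> R \<noteq> {}"
proof
  assume "non_leaf (graft i R S True) [i]"
  then obtain c where "[i, c] \<in> graft i R S True" unfolding non_leaf_def by auto
  then show "R \<noteq> {}" using Cons_mem_graft[OF assms(2), of "[c]"] by auto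
next
  assume "R \<noteq> {}"
  then obtain r where "r \<in> R" by auto
  then have "[i] @ [r] \<in> graft i R S True" using assms Cons_mem_graft[OF assms(2), of "[r]"] by auto
  moreover have "[i] \<in> graft i R S True" using root_mem_graft[OF assms(2)] by auto
  ultimately show "non_leaf (graft i R S True) [i]" unfolding non_leaf_def by blast
qed

lemma non_leaf_graft_Cons:
  assumes h: "rooted_at R S" and p: "p \<noteq> []"
  shows "non_leaf (graft i R S True) (i # p) \<longleftrightarrow> hd p \<in> R \<and> non_leaf (S (hd p)) p"
proof -
  have e: "(i # p) @ [c] \<in> graft i R S True \<longleftrightarrow> hd p \<in> R \<and> p @ [c] \<in> S (hd p)" for c
    using Cons_mem_graft[OF h, of "p @ [c]" i True] p by (simp add: hd_append2)
  have e2: "i # p \<in> graft i R S True \<longleftrightarrow> hd p \<in> R \<and> p \<in> S (hd p)"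
    using Cons_mem_graft[OF h, of p i True] p by simp
  show ?thesis unfolding non_leaf_def e e2 by blast
qed

lemma non_leaf_graft_cases:
  assumes h: "rooted_at R S" and nl: "non_leaf (graft i R S True) q"
  shows "q = [i] \<or> (\<exists>p. q = i # p \<and> p \<noteq> [])"
proof -
  have "q \<in> graft i R S True" using nl unfolding non_leaf_def by simp
  then show ?thesis unfolding graft_mem[OF h] by blast
qed

lemma incident_graft_Cons:
  assumes h: "rooted_at R Nf" and p: "p \<noteq> []" "hd p \<in> R"
  shows "incident (graft i R Nf m) (i # p) = Cons i ` incident (Nf (hd p)) p"
proof (rule set_eqI)
  fix q
  show "q \<in> incident (graft i R Nf m) (i # p) \<longleftrightarrow> q \<in> Cons i ` incident (Nf (hd p)) p"
  proof
    assume q: "q \<in> incident (graft i R Nf m) (i # p)"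
    then have qc: "q \<in> graft i R Nf m" and qq: "q = i # p \<or> butlast q = i # p" unfolding incident_def by auto
    obtain a q' where q': "q = a # q'" using qq by (cases q) auto
    have q'ne: "q' \<noteq> []" using qq q' p(1) by (cases q') auto
    have a: "a = i" using qq q' q'ne by (cases q') auto
    have qq': "q' = p \<or> butlast q' = p" using qq q' q'ne a by auto
    have "hd q' = hd p"
    proof (cases "q' = p")
      case False
      then have "butlast q' = p" using qq' by simp
      then have "q' = p @ [last q']" using q'ne by (metis append_butlast_last_id)
      then show ?thesis using p(1) by (metis hd_append2)
    qed simp
    then have "q' \<in> Nf (hd p)" using qc q' a q'ne Cons_mem_graft[OF h, of q' i m] by simp
    then have "q' \<in> incident (Nf (hd p)) p" using qq' unfolding incident_def by simp
    then show "q \<in> Cons i ` incident (Nf (hd p)) p" using q' a by simp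
  next
    assume "q \<in> Cons i ` incident (Nf (hd p)) p"
    then obtain q' where q': "q = i # q'" "q' \<in> Nf (hd p)" "q' = p \<or> butlast q' = p"
      unfolding incident_def by auto
    have q'ne: "q' \<noteq> []" "hd q' = hd p" using q'(2) p(2) h unfolding rooted_at_def by auto
    have "q \<in> graft i R Nf m" using q' q'ne Cons_mem_graft[OF h, of q' i m] p by simp
    moreover have "q = i # p \<or> butlast q = i # p" using q' q'ne by auto
    ultimately show "q \<in> incident (graft i R Nf m) (i # p)" unfolding incident_def by simp
  qed
qed

lemma incident_graft_root:
  assumes h: "rooted_at R Nf"
  shows "incident (graft i R Nf m) [i] = (if m then {[i]} else {}) \<union> (\<lambda>r. [i, r]) ` {r \<in> R. [r] \<in> Nf r}"
proof (rule set_eqI)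
  fix q
  show "q \<in> incident (graft i R Nf m) [i] \<longleftrightarrow> q \<in> (if m then {[i]} else {}) \<union> (\<lambda>r. [i, r]) ` {r \<in> R. [r] \<in> Nf r}"
  proof
    assume q: "q \<in> incident (graft i R Nf m) [i]"
    then have qc: "q \<in> graft i R Nf m" and qq: "q = [i] \<or> butlast q = [i]" unfolding incident_def by auto
    show "q \<in> (if m then {[i]} else {}) \<union> (\<lambda>r. [i, r]) ` {r \<in> R. [r] \<in> Nf r}"
    proof (cases "q = [i]")
      case True
      then show ?thesis using qc root_mem_graft[OF h] by simp
    next
      case False
      then have "butlast q = [i]" using qq by simp
      then have "q \<noteq> []" by auto
      then have "q = butlast q @ [last q]" by simp
      then have qe: "q = [i, last q]" using \<open>butlast q = [i]\<close> by simp
      then have "last q \<in> R \<and> [last q] \<in> Nf (last q)" using qc Cons_mem_graft[OF h, of "[last q]" i m] by simp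
      then show ?thesis using qe by blast
    qed
  next
    assume "q \<in> (if m then {[i]} else {}) \<union> (\<lambda>r. [i, r]) ` {r \<in> R. [r] \<in> Nf r}"
    then show "q \<in> incident (graft i R Nf m) [i]"
    proof
      assume "q \<in> (if m then {[i]} else {})"
      then show ?thesis using root_mem_graft[OF h] unfolding incident_def by (simp split: if_splits)
    next
      assume "q \<in> (\<lambda>r. [i, r]) ` {r \<in> R. [r] \<in> Nf r}"
      then obtain r where "q = [i, r]" "r \<in> R" "[r] \<in> Nf r" by auto
      then show ?thesis using Cons_mem_graft[OF h, of "[r]" i m] unfolding incident_def by simp
    qed
  qed
qed

lemma card_incident_graft_root:
  assumes "rooted_at R Nf" "finite R"
  shows "card (incident (graft i R Nf m) [i]) = (if m then 1 else 0) + card {r \<in> R. [r] \<in> Nf r}"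
proof -
  have inj: "inj (\<lambda>r. [i, r])" by (auto simp: inj_def)
  have "card ((\<lambda>r. [i, r]) ` {r \<in> R. [r] \<in> Nf r}) = card {r \<in> R. [r] \<in> Nf r}"
    using inj by (simp add: card_image inj_on_def)
  moreover have "finite ((\<lambda>r. [i, r]) ` {r \<in> R. [r] \<in> Nf r})" using assms(2) by simp
  moreover have "[i] \<notin> (\<lambda>r. [i, r]) ` {r \<in> R. [r] \<in> Nf r}" by auto
  ultimately show ?thesis unfolding incident_graft_root[OF assms(1)] by simp
qed

lemma degree_condition_graft_Cons:
  assumes S: "rooted_at R S" and sub: "\<forall>r\<in>R. Nf r \<subseteq> S r" and p: "p \<noteq> []"
  shows "(non_leaf (graft i R S True) (i # p) \<longrightarrow>
           card (incident (graft i R Nf m) (i # p)) = b (last (i # p)))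
     \<longleftrightarrow> (hd p \<in> R \<and> non_leaf (S (hd p)) p \<longrightarrow> card (incident (Nf (hd p)) p) = b (last p))"
proof (cases "hd p \<in> R")
  case True
  have "card (incident (graft i R Nf m) (i # p)) = card (incident (Nf (hd p)) p)"
    unfolding incident_graft_Cons[OF rooted_at_mono[OF S sub] p True] by (simp add: card_image)
  then show ?thesis using non_leaf_graft_Cons[OF S p] p by simp
next
  case False
  then show ?thesis using non_leaf_graft_Cons[OF S p] by simp
qed

lemma degree_condition_graft_root:
  assumes "finite R" and S: "rooted_at R S" "\<forall>r\<in>R. [r] \<in> S r" and sub: "\<forall>r\<in>R. Nf r \<subseteq> S r"
  shows "(non_leaf (graft i R S True) [i] \<longrightarrow> card (incident (graft i R Nf m) [i]) = b (last [i]))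
     \<longleftrightarrow> (R \<noteq> {} \<longrightarrow> (if m then 1 else 0) + card {r \<in> R. [r] \<in> Nf r} = b i)"
  using non_leaf_graft_root[OF S(2,1), of i]
    card_incident_graft_root[OF rooted_at_mono[OF S(1) sub] \<open>finite R\<close>, of i m]
  by simp

lemma branch_b_matching_graft:
  assumes "finite R" and S: "rooted_at R S" "\<forall>r\<in>R. [r] \<in> S r" and sub: "\<forall>r\<in>R. Nf r \<subseteq> S r"
  shows "branch_b_matching b (graft i R S True) (graft i R Nf m) \<longleftrightarrow>
     (\<forall>r\<in>R. branch_b_matching b (S r) (Nf r)) \<and>
     (R \<noteq> {} \<longrightarrow> (if m then 1 else 0) + card {r \<in> R. [r] \<in> Nf r} = b i)"
proof -
  let ?deg = "\<lambda>B N p. non_leaf B p \<longrightarrow> card (incident N p) = b (last p)"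
  have graft_nodes: "(\<forall>q. ?deg (graft i R S True) (graft i R Nf m) q) \<longleftrightarrow>
      ?deg (graft i R S True) (graft i R Nf m) [i] \<and>
      (\<forall>p. p \<noteq> [] \<longrightarrow> ?deg (graft i R S True) (graft i R Nf m) (i # p))"
    using non_leaf_graft_cases[OF S(1), of i] by (metis (no_types, lifting))
  have child_nodes: "(\<forall>r\<in>R. \<forall>p. ?deg (S r) (Nf r) p) \<longleftrightarrow>
      (\<forall>p. p \<noteq> [] \<longrightarrow> hd p \<in> R \<and> non_leaf (S (hd p)) p \<longrightarrow> card (incident (Nf (hd p)) p) = b (last p))"
  proof (intro iffI allI ballI impI)
    fix r p assume "r \<in> R" and "non_leaf (S r) p"
    then have "p \<noteq> []" "hd p = r" using S(1) unfolding rooted_at_def non_leaf_def by auto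
    moreover assume "\<forall>p. p \<noteq> [] \<longrightarrow> hd p \<in> R \<and> non_leaf (S (hd p)) p \<longrightarrow> card (incident (Nf (hd p)) p) = b (last p)"
    ultimately show "card (incident (Nf r) p) = b (last p)" using \<open>r \<in> R\<close> \<open>non_leaf (S r) p\<close> by blast
  qed auto
  have "branch_b_matching b (graft i R S True) (graft i R Nf m) \<longleftrightarrow>
      (\<forall>q. ?deg (graft i R S True) (graft i R Nf m) q)"
    unfolding branch_b_matching_def using graft_mono[OF sub] by blast
  also have "\<dots> \<longleftrightarrow> (R \<noteq> {} \<longrightarrow> (if m then 1 else 0) + card {r \<in> R. [r] \<in> Nf r} = b i) \<and>
      (\<forall>p. p \<noteq> [] \<longrightarrow> hd p \<in> R \<and> non_leaf (S (hd p)) p \<longrightarrow> card (incident (Nf (hd p)) p) = b (last p))"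
    unfolding graft_nodes
    using degree_condition_graft_Cons[OF S(1) sub, of _ i m b] degree_condition_graft_root[OF assms, of i m b]
    by simp
  also have "\<dots> \<longleftrightarrow> (R \<noteq> {} \<longrightarrow> (if m then 1 else 0) + card {r \<in> R. [r] \<in> Nf r} = b i) \<and>
      (\<forall>r\<in>R. branch_b_matching b (S r) (Nf r))"
    unfolding branch_b_matching_def child_nodes[symmetric] using sub by blast
  finally show ?thesis by blast
qed

lemma branch_weight_graft:
  assumes fin: "finite R" and hN: "rooted_at R Nf" and finN: "\<forall>r\<in>R. finite (Nf r)"
  shows "branch_weight w j (graft i R Nf m) = (if m then w {j, i} else 0) + (\<Sum>r\<in>R. branch_weight w i (Nf r))"
proof -
  have eq: "graft i R Nf m = (if m then {[i]} else {}) \<union> (\<Union>r\<in>R. Cons i ` Nf r)"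
    unfolding graft_def by auto
  have disj: "(if m then {[i]} else {}) \<inter> (\<Union>r\<in>R. Cons i ` Nf r) = {}"
    using hN unfolding rooted_at_def by auto
  have finU: "finite (\<Union>r\<in>R. Cons i ` Nf r)" using fin finN by simp
  have pd: "\<forall>r\<in>R. \<forall>r'\<in>R. r \<noteq> r' \<longrightarrow> Cons i ` Nf r \<inter> Cons i ` Nf r' = {}"
  proof (intro ballI impI)
    fix r r' assume "r \<in> R" "r' \<in> R" "r \<noteq> r'"
    have "hd p = r" if "p \<in> Nf r" for p using hN \<open>r \<in> R\<close> that unfolding rooted_at_def by blast
    moreover have "hd p = r'" if "p \<in> Nf r'" for p using hN \<open>r' \<in> R\<close> that unfolding rooted_at_def by blast
    ultimately have "Nf r \<inter> Nf r' = {}" using \<open>r \<noteq> r'\<close> by blast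
    then show "Cons i ` Nf r \<inter> Cons i ` Nf r' = {}" by auto
  qed
  let ?g = "\<lambda>q. w {last (j # butlast q), last q}"
  have "branch_weight w j (graft i R Nf m) = sum ?g (if m then {[i]} else {}) + sum ?g (\<Union>r\<in>R. Cons i ` Nf r)"
    unfolding branch_weight_def eq using disj finU by (simp add: sum.union_disjoint)
  also have "sum ?g (if m then {[i]} else {}) = (if m then w {j, i} else 0)" by simp
  also have "sum ?g (\<Union>r\<in>R. Cons i ` Nf r) = (\<Sum>r\<in>R. sum ?g (Cons i ` Nf r))"
    using sum.UNION_disjoint[of R "\<lambda>r. Cons i ` Nf r" ?g] fin finN pd by simp
  also have "\<dots> = (\<Sum>r\<in>R. branch_weight w i (Nf r))"
  proof (rule sum.cong)
    fix r assume r: "r \<in> R"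
    have "sum ?g (Cons i ` Nf r) = sum (?g \<circ> Cons i) (Nf r)" by (simp add: sum.reindex)
    also have "\<dots> = branch_weight w i (Nf r)" unfolding branch_weight_def
    proof (rule sum.cong)
      fix p assume "p \<in> Nf r"
      then have "p \<noteq> []" using hN r unfolding rooted_at_def by blast
      then show "(?g \<circ> Cons i) p = w {last (i # butlast p), last p}" by simp
    qed simp
    finally show "sum ?g (Cons i ` Nf r) = branch_weight w i (Nf r)" .
  qed simp
  finally show ?thesis .
qed

lemma perfect_tree_b_matching_graft_iff:
  assumes "rooted_at R S"
  shows "perfect_tree_b_matching b (graft i R S True) N \<longleftrightarrow>
    branch_b_matching b (graft i R S True) N \<and> [i] \<notin> N"
proof -
  have "2 \<le> length q \<longleftrightarrow> q \<noteq> [i]" if "q \<in> graft i R S True" for q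
    using that unfolding graft_mem[OF assms] by (auto simp: Suc_le_eq neq_Nil_conv)
  then show ?thesis
    unfolding perfect_tree_b_matching_def branch_b_matching_def tree_edges_def by blast
qed

lemma sum_tree_edge_weight:
  assumes "\<forall>q\<in>M. 2 \<le> length q"
  shows "(\<Sum>q\<in>M. tree_edge_weight w q) = branch_weight w i M"
  unfolding branch_weight_def tree_edge_weight_def
proof (rule sum.cong)
  fix q assume "q \<in> M"
  then have "butlast q \<noteq> []" using assms by (cases q) auto
  then show "w {last (butlast q), last q} = w {last (i # butlast q), last q}" by simp
qed simp

lemma length_two_graft:
  assumes "rooted_at R Nf"
  shows "{q \<in> graft i R Nf m. length q = 2} = (\<lambda>r. [i, r]) ` {r \<in> R. [r] \<in> Nf r}"
  using Cons_mem_graft[OF assms, of "[_]"] unfolding graft_mem[OF assms]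
  by (auto simp: length_Suc_conv numeral_2_eq_2)

section \<open>Optimal choices below a node\<close>

definition optimal_pair ::
  "('v \<Rightarrow> nat) \<Rightarrow> ('v set \<Rightarrow> real) \<Rightarrow> 'v list set \<Rightarrow> 'v \<Rightarrow> 'v \<Rightarrow> 'v list set \<Rightarrow> 'v list set \<Rightarrow> bool" where
  "optimal_pair b w B i j N0 N1 \<longleftrightarrow>
     branch_b_matching b B N0 \<and> [i] \<notin> N0 \<and> branch_b_matching b B N1 \<and> [i] \<in> N1 \<and>
     (\<forall>N. branch_b_matching b B N \<and> [i] \<notin> N \<longrightarrow> branch_weight w j N0 \<le> branch_weight w j N) \<and>
     (\<forall>N. branch_b_matching b B N \<and> [i] \<in> N \<longrightarrow> branch_weight w j N1 \<le> branch_weight w j N)"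

definition pick :: "'a set \<Rightarrow> ('a \<Rightarrow> 'b) \<Rightarrow> ('a \<Rightarrow> 'b) \<Rightarrow> 'a \<Rightarrow> 'b" where
  "pick Q f g r = (if r \<in> Q then f r else g r)"

locale optimal_children =
  fixes b :: "'v \<Rightarrow> nat" and w :: "'v set \<Rightarrow> real" and i :: 'v and R :: "'v set"
    and S n0 n1 :: "'v \<Rightarrow> 'v list set" and gain :: "'v \<Rightarrow> real"
  assumes finite_R: "finite R" and R_nonempty: "R \<noteq> {}"
    and S_rooted: "rooted_at R S" and root_in_S: "\<forall>r\<in>R. [r] \<in> S r"
    and finite_S: "\<forall>r\<in>R. finite (S r)"
    and optimal: "\<forall>r\<in>R. optimal_pair b w (S r) r i (n0 r) (n1 r)"
    and gain: "\<forall>r\<in>R. branch_weight w i (n1 r) - branch_weight w i (n0 r) = gain r"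
begin

lemma pick_subset: "\<forall>r\<in>R. pick Q n1 n0 r \<subseteq> S r"
  using optimal unfolding pick_def optimal_pair_def branch_b_matching_def by auto

lemma pick_rooted: "rooted_at R (pick Q n1 n0)"
  using rooted_at_mono[OF S_rooted pick_subset] .

lemma finite_pick: "\<forall>r\<in>R. finite (pick Q n1 n0 r)"
  using pick_subset finite_S finite_subset by metis

lemma root_edges_pick: "Q \<subseteq> R \<Longrightarrow> {r \<in> R. [r] \<in> pick Q n1 n0 r} = Q"
  using optimal unfolding pick_def optimal_pair_def by auto

lemma branch_b_matching_graft_pick:
  assumes "Q \<subseteq> R" and "card Q + (if m then 1 else 0) = b i"
  shows "branch_b_matching b (graft i R S True) (graft i R (pick Q n1 n0) m)"
proof -
  have "\<forall>r\<in>R. branch_b_matching b (S r) (pick Q n1 n0 r)"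
    using optimal unfolding pick_def optimal_pair_def by auto
  then show ?thesis
    using branch_b_matching_graft[OF finite_R S_rooted root_in_S pick_subset] root_edges_pick assms
    by auto
qed

lemma sum_branch_weight_pick:
  assumes "Q \<subseteq> R"
  shows "(\<Sum>r\<in>R. branch_weight w i (pick Q n1 n0 r)) = (\<Sum>r\<in>R. branch_weight w i (n0 r)) + sum gain Q"
proof -
  have "(\<Sum>r\<in>R. branch_weight w i (pick Q n1 n0 r))
      = (\<Sum>r\<in>R. branch_weight w i (n0 r) + (if r \<in> Q then gain r else 0))"
    using gain unfolding pick_def by (intro sum.cong) auto
  also have "\<dots> = (\<Sum>r\<in>R. branch_weight w i (n0 r)) + sum gain (R \<inter> Q)"
    using finite_R by (simp add: sum.distrib sum.inter_restrict)
  finally show ?thesis using assms by (simp add: Int_absorb1)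
qed

lemma branch_weight_graft_pick:
  assumes "Q \<subseteq> R"
  shows "branch_weight w j (graft i R (pick Q n1 n0) m)
    = (if m then w {j, i} else 0) + (\<Sum>r\<in>R. branch_weight w i (n0 r)) + sum gain Q"
  using branch_weight_graft[OF finite_R pick_rooted finite_pick] sum_branch_weight_pick[OF assms]
  by simp

text \<open>T is the set of children whose root edge N uses.\<close>
lemma branch_weight_graft_lower_bound:
  assumes N: "branch_b_matching b (graft i R S True) N" and root: "[i] \<in> N \<longleftrightarrow> m"
  obtains T where "T \<subseteq> R" and "card T + (if m then 1 else 0) = b i"
    and "(if m then w {j, i} else 0) + (\<Sum>r\<in>R. branch_weight w i (n0 r)) + sum gain T
           \<le> branch_weight w j N"
proof -
  define Nr where "Nr = (\<lambda>r. graft_part i N (S r))"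
  have N_sub: "N \<subseteq> graft i R S True" using N unfolding branch_b_matching_def by blast
  have N_eq: "N = graft i R Nr m"
    using graft_decompose[OF S_rooted N_sub] root unfolding Nr_def by simp
  have Nr_sub: "\<forall>r\<in>R. Nr r \<subseteq> S r" unfolding Nr_def by (simp add: graft_part_subset)
  have Nr_rooted: "rooted_at R Nr" using rooted_at_mono[OF S_rooted Nr_sub] .
  have finite_Nr: "\<forall>r\<in>R. finite (Nr r)" using Nr_sub finite_S finite_subset by metis
  define T where "T = {r \<in> R. [r] \<in> Nr r}"
  have Nr_matching: "\<forall>r\<in>R. branch_b_matching b (S r) (Nr r)"
    and card_T: "card T + (if m then 1 else 0) = b i"
    using N N_eq branch_b_matching_graft[OF finite_R S_rooted root_in_S Nr_sub, of b i m] R_nonempty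
    unfolding T_def by auto
  have "(\<Sum>r\<in>R. branch_weight w i (pick T n1 n0 r)) \<le> (\<Sum>r\<in>R. branch_weight w i (Nr r))"
    using optimal Nr_matching unfolding pick_def optimal_pair_def T_def by (intro sum_mono) auto
  moreover have "branch_weight w j N = (if m then w {j, i} else 0) + (\<Sum>r\<in>R. branch_weight w i (Nr r))"
    using branch_weight_graft[OF finite_R Nr_rooted finite_Nr] N_eq by simp
  ultimately show ?thesis
    using that[of T] card_T sum_branch_weight_pick[of T] unfolding T_def by auto
qed

lemma graft_pick_minimal:
  assumes Q: "Q \<subseteq> R" "card Q + (if m then 1 else 0) = b i" "\<forall>x\<in>Q. \<forall>y\<in>R - Q. gain x \<le> gain y"
    and N: "branch_b_matching b (graft i R S True) N" "[i] \<in> N \<longleftrightarrow> m"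
  shows "branch_weight w j (graft i R (pick Q n1 n0) m) \<le> branch_weight w j N"
proof -
  obtain T where T: "T \<subseteq> R" "card T + (if m then 1 else 0) = b i"
    and bound: "(if m then w {j, i} else 0) + (\<Sum>r\<in>R. branch_weight w i (n0 r)) + sum gain T
           \<le> branch_weight w j N"
    using branch_weight_graft_lower_bound[OF N] .
  have "sum gain Q \<le> sum gain T"
    using sum_smallest_le[OF finite_R Q(1) T(1) _ Q(3)] Q(2) T(2) by simp
  then show ?thesis using bound branch_weight_graft_pick[OF Q(1)] by simp
qed

lemma min_perfect_tree_b_matching_graft_pick:
  assumes F: "F \<subseteq> R" "card F = b i" "\<forall>x\<in>F. \<forall>y\<in>R - F. gain x \<le> gain y"
  shows "min_perfect_tree_b_matching w b (graft i R S True) (graft i R (pick F n1 n0) False)"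
proof -
  have F': "card F + (if False then 1 else 0) = b i" using F(2) by simp
  note perfect_iff = perfect_tree_b_matching_graft_iff[OF S_rooted]
  have tree_weight: "(\<Sum>q\<in>M. tree_edge_weight w q) = branch_weight w i M"
    if "perfect_tree_b_matching b (graft i R S True) M" for M
    using that unfolding perfect_tree_b_matching_def tree_edges_def by (intro sum_tree_edge_weight) blast
  have perfect: "perfect_tree_b_matching b (graft i R S True) (graft i R (pick F n1 n0) False)"
    unfolding perfect_iff
    using branch_b_matching_graft_pick[OF F(1) F'] root_mem_graft[OF pick_rooted] by blast
  have "branch_weight w i (graft i R (pick F n1 n0) False) \<le> branch_weight w i M"
    if "perfect_tree_b_matching b (graft i R S True) M" for M
    using that graft_pick_minimal[OF F(1) F' F(3)] unfolding perfect_iff by blast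
  then show ?thesis
    unfolding min_perfect_tree_b_matching_def using perfect tree_weight by simp
qed

end

section \<open>Computation branches and messages\<close>

lemma nbrs_subset: "simple_graph V E \<Longrightarrow> nbrs E i \<subseteq> V"
  unfolding simple_graph_def nbrs_def by (auto simp: doubleton_eq_iff)

lemma finite_nbrs: "simple_graph V E \<Longrightarrow> finite (nbrs E i)"
  using nbrs_subset simple_graph_def finite_subset by metis

lemma branch_Suc_graft:
  "(i, j) \<in> A (Suc t) \<Longrightarrow> branch E A (Suc t) i j = graft i (nbrs E i - {j}) (\<lambda>r. branch E A t r i) True"
  unfolding graft_def by simp

lemma comp_tree_graft: "comp_tree E A t i = graft i (nbrs E i) (\<lambda>r. branch E A t r i) True"
  unfolding graft_def comp_tree_def by simp

lemma branch_wellformed: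
  assumes "simple_graph V E"
  shows "finite (branch E A t i j) \<and> [i] \<in> branch E A t i j \<and> (\<forall>p\<in>branch E A t i j. p \<noteq> [] \<and> hd p = i)"
proof (induction t arbitrary: i j)
  case 0
  then show ?case by simp
next
  case (Suc t)
  show ?case
  proof (cases "(i, j) \<in> A (Suc t)")
    case False
    then show ?thesis using Suc by simp
  next
    case True
    let ?R = "nbrs E i - {j}"
    have eq: "{i # p | p r. r \<in> ?R \<and> p \<in> branch E A t r i} = (\<Union>r\<in>?R. Cons i ` branch E A t r i)"
      by auto
    have "finite ?R" using finite_nbrs[OF assms] by simp
    then have "finite (\<Union>r\<in>?R. Cons i ` branch E A t r i)" using Suc by simp
    then show ?thesis using True eq by auto
  qed
qed

lemma optimal_children_of_branches:
  assumes graph: "simple_graph V E" and R: "R \<subseteq> nbrs E i" "R \<noteq> {}"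
    and optimal: "\<forall>r\<in>R. \<exists>N0 N1. optimal_pair b w (branch E A t r i) r i N0 N1 \<and>
      branch_weight w i N1 - branch_weight w i N0 = msg E w b A t r i"
  obtains n0 n1
  where "optimal_children b w i R (\<lambda>r. branch E A t r i) n0 n1 (\<lambda>r. msg E w b A t r i)"
proof -
  obtain n0 n1 where "\<forall>r\<in>R. optimal_pair b w (branch E A t r i) r i (n0 r) (n1 r) \<and>
      branch_weight w i (n1 r) - branch_weight w i (n0 r) = msg E w b A t r i"
    using optimal by metis
  moreover have "finite R" using finite_nbrs[OF graph] R(1) finite_subset by blast
  ultimately show ?thesis
    using that[of n0 n1] R(2) branch_wellformed[OF graph]
    unfolding optimal_children_def rooted_at_def by auto
qed

lemma branch_b_matching_singleton: "branch_b_matching b {[i]} N \<longleftrightarrow> N \<subseteq> {[i]}"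
  unfolding branch_b_matching_def non_leaf_def by auto

lemma branch_optimal_pair:
  assumes graph: "simple_graph V E" and degree: "\<forall>v\<in>V. 0 < b v \<and> b v + 1 \<le> card (nbrs E v)"
    and "i \<in> V"
  shows "\<exists>N0 N1. optimal_pair b w (branch E A t i j) i j N0 N1 \<and>
     branch_weight w j N1 - branch_weight w j N0 = msg E w b A t i j"
  using \<open>i \<in> V\<close>
proof (induction t arbitrary: i j)
  case 0
  have "optimal_pair b w (branch E A 0 i j) i j {} {[i]}"
    unfolding optimal_pair_def branch.simps(1) branch_b_matching_singleton
    by (auto simp: branch_weight_def subset_singleton_iff)
  moreover have "branch_weight w j {[i]} - branch_weight w j {} = msg E w b A 0 i j"
    by (simp add: branch_weight_def insert_commute)
  ultimately show ?case by blast
next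
  case (Suc t)
  show ?case
  proof (cases "(i, j) \<in> A (Suc t)")
    case False
    then show ?thesis using Suc by simp
  next
    case True
    define R where "R = nbrs E i - {j}"
    define S where "S = (\<lambda>r. branch E A t r i)"
    define f where "f = (\<lambda>r. msg E w b A t r i)"
    have finite_R: "finite R" unfolding R_def using finite_nbrs[OF graph] by simp
    have b_pos: "1 \<le> b i" using degree Suc.prems by auto
    have b_le: "b i \<le> card R"
      using degree Suc.prems diff_card_le_card_Diff[of "{j}" "nbrs E i"] finite_nbrs[OF graph]
      unfolding R_def by fastforce
    have R_sub: "R \<subseteq> nbrs E i" unfolding R_def by blast
    have R_nonempty: "R \<noteq> {}" using b_pos b_le by auto
    have "\<forall>r\<in>R. \<exists>N0 N1. optimal_pair b w (branch E A t r i) r i N0 N1 \<and>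
        branch_weight w i N1 - branch_weight w i N0 = msg E w b A t r i"
      using Suc.IH R_sub nbrs_subset[OF graph] by blast
    then obtain n0 n1 where "optimal_children b w i R S n0 n1 f"
      unfolding S_def f_def by (rule optimal_children_of_branches[OF graph R_sub R_nonempty])
    then interpret optimal_children b w i R S n0 n1 f .
    obtain P P' where P: "P \<subseteq> R" "card P = b i" "\<forall>x\<in>P. \<forall>y\<in>R - P. f x \<le> f y"
      and P': "P' \<subseteq> R" "card P' = b i - 1" "\<forall>x\<in>P'. \<forall>y\<in>R - P'. f x \<le> f y"
      and kth: "sum f P - sum f P' = kth_smallest (b i) (image_mset f (mset_set R))"
      using kth_smallest_as_difference[OF finite_R b_le b_pos, of f] by blast
    define N0 where "N0 = graft i R (pick P n1 n0) False"
    define N1 where "N1 = graft i R (pick P' n1 n0) True"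
    have branch_eq: "branch E A (Suc t) i j = graft i R S True"
      using branch_Suc_graft[of i j A t E] True unfolding R_def S_def by simp
    have card_P': "card P' + 1 = b i" using P'(2) b_pos by simp
    have "optimal_pair b w (branch E A (Suc t) i j) i j N0 N1"
      unfolding optimal_pair_def branch_eq N0_def N1_def
      using branch_b_matching_graft_pick[OF P(1)] branch_b_matching_graft_pick[OF P'(1)]
        graft_pick_minimal[OF P(1) _ P(3)] graft_pick_minimal[OF P'(1) _ P'(3)]
        root_mem_graft[OF pick_rooted] P(2) card_P'
      by simp
    moreover have "branch_weight w j N1 - branch_weight w j N0 = msg E w b A (Suc t) i j"
      using branch_weight_graft_pick[OF P(1)] branch_weight_graft_pick[OF P'(1)] kth True
      unfolding N0_def N1_def R_def f_def by (simp add: insert_commute)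
    ultimately show ?thesis by blast
  qed
qed

text \<open>Uniqueness of the minimum identifies it with the matching assembled from the
  b_i smallest incoming messages, whatever the tie-breaking in the choice of F.\<close>
theorem corollary2:
  fixes V :: "'v set" and E :: "'v set set" and w :: "'v set \<Rightarrow> real"
    and b :: "'v \<Rightarrow> nat" and A :: "nat \<Rightarrow> ('v \<times> 'v) set"
    and i :: 'v and t :: nat and M :: "'v list set" and F :: "'v set"
  assumes "simple_graph V E"
    and "\<forall>v\<in>V. 0 < b v \<and> b v + 1 \<le> card (nbrs E v)"
    and "valid_schedule E A"
    and "i \<in> V"
    and "min_perfect_tree_b_matching w b (comp_tree E A t i) M"
    and "\<forall>M'. min_perfect_tree_b_matching w b (comp_tree E A t i) M' \<longrightarrow> M' = M"
    and "bp_choice E w b A t i F"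
  shows "{{i, j} | j. j \<in> F} = {{i, last q} | q. q \<in> M \<and> length q = 2}"
proof -
  define R where "R = nbrs E i"
  define S where "S = (\<lambda>r. branch E A t r i)"
  define f where "f = (\<lambda>r. msg E w b A t r i)"
  have R_sub: "R \<subseteq> nbrs E i" and R_nonempty: "R \<noteq> {}"
    using assms(2,4) unfolding R_def by fastforce+
  have "\<forall>r\<in>R. \<exists>N0 N1. optimal_pair b w (branch E A t r i) r i N0 N1 \<and>
      branch_weight w i N1 - branch_weight w i N0 = msg E w b A t r i"
    using branch_optimal_pair[OF assms(1,2)] R_sub nbrs_subset[OF assms(1)] by blast
  then obtain n0 n1 where "optimal_children b w i R S n0 n1 f"
    unfolding S_def f_def by (rule optimal_children_of_branches[OF assms(1) R_sub R_nonempty])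
  then interpret optimal_children b w i R S n0 n1 f .
  have F: "F \<subseteq> R" "card F = b i" "\<forall>x\<in>F. \<forall>y\<in>R - F. f x \<le> f y"
    using assms(7) unfolding bp_choice_def R_def f_def by auto
  have "graft i R (pick F n1 n0) False = M"
    using min_perfect_tree_b_matching_graft_pick[OF F] assms(6) comp_tree_graft[of E A t i]
    unfolding R_def S_def by simp
  moreover have "{q \<in> graft i R (pick F n1 n0) False. length q = 2} = (\<lambda>r. [i, r]) ` F"
    using length_two_graft[OF pick_rooted] root_edges_pick[OF F(1)] by simp
  ultimately have "{{i, last q} | q. q \<in> M \<and> length q = 2} = (\<lambda>q. {i, last q}) ` (\<lambda>r. [i, r]) ` F"
    by blast
  then show ?thesis by (auto simp: image_image)
qed

end
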